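(* Fix $\mu\in\mathcal P$ and a sample set $\{y^1,\dots,y^N\}\subset\Xi$, $N\ge2$. With all quantities defined as in the context (evaluated at $(y^n,\mu)$ for each sample), \begin{align*} &\big|V[l(u)]-V[l(u^R)]+V[r(u^R_{(1)})]+\underline E[r(u^R_{(2)})]-\underline E[r(u^R_{(3)})]-E[r(u^R_{(4)})]\big|\\ &\le \underline E\Big[\frac{\|r\|_{X'}^2\|r_{(1)}\|_{X'}^2}{\alpha^2}\Big]+E\Big[\frac{\|r\|_{X'}\|r_{(1)}\|_{X'}}{\alpha}\Big]\,\underline E\Big[\frac{\|r\|_{X'}\|r_{(1)}\|_{X'}}{\alpha}\Big] +\underline E\Big[\frac{\big\|r_{(2)}-r_{(3)}-\frac{N-1}{N}r_{(4)}\big\|_{X'}\,\|r\|_{X'}}{\alpha}\Big]. \end{align*}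
   Context: $X$ is a real separable Hilbert space; $\Xi\subset\mathbb R^K$ and $\mathcal P\subset\mathbb R^P$ are parameter domains. For each $(y,\mu)$, $a(\cdot,\cdot;y,\mu)$ is a bounded bilinear form on $X\times X$, coercive with coercivity factor $\alpha(y,\mu):=\inf_{v\ne0}a(v,v;y,\mu)/\|v\|_X^2>0$, and $f(\cdot;y,\mu)$, $l(\cdot;y,\mu)$ are bounded linear forms on $X$. Dual norm $\|F\|_{X'}:=\sup_{v\ne0}|F(v)|/\|v\|_X$. For a function $g$ of $y$ and samples $y^1,\dots,y^N$, define $E[g]:=\frac1N\sum_{n}g(y^n)$, $\underline E[g]:=\frac1{N-1}\sum_n g(y^n)$, $V[g]:=\underline E[g^2]-\underline E[g]E[g]$. Fix subspaces $X^R,X^R_{(1)},\dots,X^R_{(4)}\subset X$. For each $(y,\mu)$ (forms evaluated at $(y,\mu)$): $u\in X$ solves $a(u,v)=f(v)$ $\forall v\in X$; $u^R\in X^R$ solves $a(u^R,v)=f(v)$ $\forall v\in X^R$; residual $r(\cdot):=f(\cdot)-a(u^R,\cdot)$. Linear forms: $l_{(1)}(\cdot):=l(\cdot)$; $l_{(2)}(\cdot):=2\big(l(u^R)-r(u^R_{(1)})\big)l(\cdot)$; $l_{(3)}(\cdot):=E\big[l(u^R)-r(u^R_{(1)})\big]\,l(\cdot)$; $l_{(4)}(\cdot):=\underline E\big[l(u^R)-r(u^R_{(1)})\big]\,l(\cdot)$, where in $l_{(3)},l_{(4)}$ the Monte Carlo means are taken over the samples (so they are scalars independent of $y$). For $i=1,\dots,4$,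 $u^R_{(i)}\in X^R_{(i)}$ solves $a(v,u^R_{(i)})=-l_{(i)}(v)$ for all $v\in X^R_{(i)}$ (defined successively), and $r_{(i)}(\cdot):=-l_{(i)}(\cdot)-a(\cdot,u^R_{(i)})$. *)

theory Defs
  imports "HOL-Analysis.Analysis"
begin

definition coercivity_factor :: "('x::real_normed_vector \<Rightarrow> 'x \<Rightarrow> real) \<Rightarrow> real" where
  "coercivity_factor A = (INF v \<in> - {0}. A v v / (norm v)\<^sup>2)"

abbreviation dual_norm :: "('x::real_normed_vector \<Rightarrow> real) \<Rightarrow> real" where
  "dual_norm F \<equiv> onorm F"

definition MC_E :: "nat \<Rightarrow> (nat \<Rightarrow> real) \<Rightarrow> real" where
  "MC_E N g = (\<Sum>n<N. g n) / real N"

definition MC_Eu :: "nat \<Rightarrow> (nat \<Rightarrow> real) \<Rightarrow> real" where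
  "MC_Eu N g = (\<Sum>n<N. g n) / (real N - 1)"

definition MC_V :: "nat \<Rightarrow> (nat \<Rightarrow> real) \<Rightarrow> real" where
  "MC_V N g = MC_Eu N (\<lambda>n. (g n)\<^sup>2) - MC_Eu N g * MC_E N g"

end

theory Submission
  imports Defs
begin

text \<open>Write \<open>e = u - u\<^sup>R\<close>, so that the primal residual is \<open>r = a(e, _)\<close>. For dual data \<open>L\<close>
  and any \<open>z\<close>, the dual residual \<open>r\<^sub>L = -L - a(_, z)\<close> satisfies \<open>r(z) = a(e, z) = -L(e) - r\<^sub>L(e)\<close>.
  With \<open>L = l\<close> this gives \<open>l(u) = Q - r\<^sub>1(e)\<close> and \<open>l(u\<^sup>R) = Q + r(u\<^sub>1)\<close>; with \<open>L = c l\<close> it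
  expresses the other corrections through \<open>Q\<close>, \<open>r(u\<^sub>1)\<close> and \<open>r\<^sub>1(e)\<close>. As the Monte Carlo
  variance is the quadratic form of a symmetric empirical covariance, everything then cancels
  except \<open>V[r\<^sub>1(e)]\<close> and the mean of \<open>(r\<^sub>2 - r\<^sub>3 - (N-1)/N r\<^sub>4)(e)\<close>, and coercivity bounds every
  dual residual at \<open>e\<close> by \<open>\<parallel>r\<^sub>L\<parallel> \<parallel>e\<parallel> \<le> \<parallel>r\<^sub>L\<parallel> \<parallel>r\<parallel> / \<alpha>\<close>.\<close>

lemma MC_E_linear:
  "MC_E N (\<lambda>n. g n + h n) = MC_E N g + MC_E N h"
  "MC_E N (\<lambda>n. g n - h n) = MC_E N g - MC_E N h"
  "MC_E N (\<lambda>n. c * g n) = c * MC_E N g"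
  by (simp_all add: MC_E_def sum.distrib sum_subtractf add_divide_distrib diff_divide_distrib
      flip: sum_distrib_left)

lemma MC_Eu_linear:
  "MC_Eu N (\<lambda>n. g n + h n) = MC_Eu N g + MC_Eu N h"
  "MC_Eu N (\<lambda>n. g n - h n) = MC_Eu N g - MC_Eu N h"
  "MC_Eu N (\<lambda>n. c * g n) = c * MC_Eu N g"
  by (simp_all add: MC_Eu_def sum.distrib sum_subtractf add_divide_distrib diff_divide_distrib
      flip: sum_distrib_left)

lemma MC_Eu_mult_MC_E_commute: "MC_Eu N g * MC_E N h = MC_E N g * MC_Eu N h"
  by (simp add: MC_Eu_def MC_E_def)

lemma MC_E_eq_scaled_MC_Eu:
  assumes "N \<noteq> 1"
  shows "MC_E N g = (real N - 1) / real N * MC_Eu N g"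
  using assms by (cases "N = 0") (simp_all add: MC_E_def MC_Eu_def)

lemma MC_cong:
  assumes "\<And>n. n < N \<Longrightarrow> g n = h n"
  shows "MC_E N g = MC_E N h" "MC_Eu N g = MC_Eu N h" "MC_V N g = MC_V N h"
proof -
  have "(\<Sum>n<N. g n) = (\<Sum>n<N. h n)" "(\<Sum>n<N. (g n)\<^sup>2) = (\<Sum>n<N. (h n)\<^sup>2)"
    using assms by (auto intro: sum.cong)
  then show "MC_E N g = MC_E N h" "MC_Eu N g = MC_Eu N h" "MC_V N g = MC_V N h"
    by (simp_all add: MC_E_def MC_Eu_def MC_V_def)
qed

definition MC_Cov :: "nat \<Rightarrow> (nat \<Rightarrow> real) \<Rightarrow> (nat \<Rightarrow> real) \<Rightarrow> real" where
  "MC_Cov N g h = MC_Eu N (\<lambda>n. g n * h n) - MC_Eu N g * MC_E N h"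

lemma MC_Cov_add_right: "MC_Cov N g (\<lambda>n. h n + k n) = MC_Cov N g h + MC_Cov N g k"
  by (simp add: MC_Cov_def distrib_left MC_E_linear MC_Eu_linear)

lemma MC_V_add: "MC_V N (\<lambda>n. g n + h n) = MC_V N g + 2 * MC_Cov N g h + MC_V N h"
proof -
  have "(\<lambda>n. (g n + h n)\<^sup>2) = (\<lambda>n. (g n)\<^sup>2 + 2 * (g n * h n) + (h n)\<^sup>2)"
    by (simp add: power2_sum algebra_simps)
  then show ?thesis
    using MC_Eu_mult_MC_E_commute[of N h g]
    by (simp only: MC_V_def MC_Cov_def MC_E_linear MC_Eu_linear) (simp add: algebra_simps)
qed

lemma MC_V_diff: "MC_V N (\<lambda>n. g n - h n) = MC_V N g - 2 * MC_Cov N g h + MC_V N h"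
proof -
  have "(\<lambda>n. (g n - h n)\<^sup>2) = (\<lambda>n. (g n)\<^sup>2 - 2 * (g n * h n) + (h n)\<^sup>2)"
    by (simp add: power2_diff algebra_simps)
  then show ?thesis
    using MC_Eu_mult_MC_E_commute[of N h g]
    by (simp only: MC_V_def MC_Cov_def MC_E_linear MC_Eu_linear) (simp add: algebra_simps)
qed

lemma MC_control_variate_identity:
  assumes "N \<noteq> 1"
  shows "MC_V N (\<lambda>n. Q n - d n) - MC_V N (\<lambda>n. Q n + t n) + MC_V N t
     + MC_Eu N (\<lambda>n. 2 * Q n * (t n + d n) - w\<^sub>2 n)
     - MC_Eu N (\<lambda>n. MC_E N Q * (t n + d n) - w\<^sub>3 n)
     - MC_E N (\<lambda>n. MC_Eu N Q * (t n + d n) - w\<^sub>4 n)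
   = MC_V N d - MC_Eu N (\<lambda>n. w\<^sub>2 n - w\<^sub>3 n - (real N - 1) / real N * w\<^sub>4 n)"
proof -
  let ?s = "\<lambda>n. t n + d n"
  have "MC_Eu N (\<lambda>n. 2 * Q n * ?s n) - MC_E N Q * MC_Eu N ?s - MC_Eu N Q * MC_E N ?s
      = 2 * MC_Cov N Q ?s"
    using MC_Eu_mult_MC_E_commute[of N Q ?s]
    by (simp add: MC_Cov_def MC_Eu_linear mult.assoc)
  moreover have "MC_V N (\<lambda>n. Q n - d n) - MC_V N (\<lambda>n. Q n + t n) + MC_V N t
      = MC_V N d - 2 * MC_Cov N Q ?s"
    by (simp add: MC_V_add MC_V_diff MC_Cov_add_right)
  ultimately show ?thesis
    using MC_E_eq_scaled_MC_Eu[OF assms, of w\<^sub>4] by (simp only: MC_E_linear MC_Eu_linear)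
qed

lemma MC_E_abs_le:
  assumes "\<And>n. n < N \<Longrightarrow> \<bar>g n\<bar> \<le> b n"
  shows "\<bar>MC_E N g\<bar> \<le> MC_E N b"
  unfolding MC_E_def abs_divide abs_of_nat
  by (intro divide_right_mono sum_norm_le[of _ g b, unfolded real_norm_def] assms) simp_all

lemma MC_Eu_abs_le:
  assumes "\<And>n. n < N \<Longrightarrow> \<bar>g n\<bar> \<le> b n"
  shows "\<bar>MC_Eu N g\<bar> \<le> MC_Eu N b"
proof (cases "N = 0")
  case False
  then have "\<bar>real N - 1\<bar> = real N - 1" by simp
  then show ?thesis
    unfolding MC_Eu_def abs_divide \<open>\<bar>real N - 1\<bar> = real N - 1\<close>
    by (intro divide_right_mono sum_norm_le[of _ g b, unfolded real_norm_def] assms) (use False in auto)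
qed (simp add: MC_Eu_def)

lemma MC_V_diff_MC_Eu_abs_le:
  assumes "\<And>n. n < N \<Longrightarrow> \<bar>d n\<bar> \<le> b n"
    and "\<And>n. n < N \<Longrightarrow> \<bar>w n\<bar> \<le> c n"
  shows "\<bar>MC_V N d - MC_Eu N w\<bar> \<le> MC_Eu N (\<lambda>n. (b n)\<^sup>2) + MC_E N b * MC_Eu N b + MC_Eu N c"
proof -
  have "\<bar>(d n)\<^sup>2\<bar> \<le> (b n)\<^sup>2" if "n < N" for n
    using assms(1)[OF that] abs_le_square_iff[of "d n" "b n"] by simp
  then have "\<bar>MC_Eu N (\<lambda>n. (d n)\<^sup>2)\<bar> \<le> MC_Eu N (\<lambda>n. (b n)\<^sup>2)"
    by (rule MC_Eu_abs_le)
  moreover have "\<bar>MC_Eu N d * MC_E N d\<bar> \<le> MC_E N b * MC_Eu N b"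
  proof -
    have "\<bar>MC_E N d\<bar> \<le> MC_E N b" "\<bar>MC_Eu N d\<bar> \<le> MC_Eu N b"
      using MC_E_abs_le MC_Eu_abs_le assms(1) by blast+
    then show ?thesis
      unfolding abs_mult by (metis abs_ge_zero mult.commute mult_mono order_trans)
  qed
  moreover have "\<bar>MC_Eu N w\<bar> \<le> MC_Eu N c"
    by (rule MC_Eu_abs_le[OF assms(2)])
  ultimately show ?thesis
    unfolding MC_V_def by linarith
qed

lemma MC_control_variate_bound:
  assumes "N \<noteq> 1"
    and "\<And>n. n < N \<Longrightarrow> X n = Q n - d n"
    and "\<And>n. n < N \<Longrightarrow> XR n = Q n + t n"
    and "\<And>n. n < N \<Longrightarrow> Z\<^sub>2 n = 2 * Q n * (t n + d n) - w\<^sub>2 n"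
    and "\<And>n. n < N \<Longrightarrow> Z\<^sub>3 n = MC_E N Q * (t n + d n) - w\<^sub>3 n"
    and "\<And>n. n < N \<Longrightarrow> Z\<^sub>4 n = MC_Eu N Q * (t n + d n) - w\<^sub>4 n"
    and "\<And>n. n < N \<Longrightarrow> \<bar>d n\<bar> \<le> b n"
    and "\<And>n. n < N \<Longrightarrow> \<bar>w\<^sub>2 n - w\<^sub>3 n - (real N - 1) / real N * w\<^sub>4 n\<bar> \<le> c n"
  shows "\<bar>MC_V N X - MC_V N XR + MC_V N t + MC_Eu N Z\<^sub>2 - MC_Eu N Z\<^sub>3 - MC_E N Z\<^sub>4\<bar>
    \<le> MC_Eu N (\<lambda>n. (b n)\<^sup>2) + MC_E N b * MC_Eu N b + MC_Eu N c"
  using MC_V_diff_MC_Eu_abs_le[OF assms(7,8)]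
  by (simp only: MC_cong[OF assms(2)] MC_cong[OF assms(3)] MC_cong[OF assms(4)]
      MC_cong[OF assms(5)] MC_cong[OF assms(6)] MC_control_variate_identity[OF assms(1)])

lemma coercivity_factor_mult_norm_le:
  fixes A :: "'x::real_normed_vector \<Rightarrow> 'x \<Rightarrow> real"
  assumes "bounded_bilinear A"
  shows "coercivity_factor A * (norm v)\<^sup>2 \<le> A v v"
proof (cases "v = 0")
  case True
  then show ?thesis using bounded_bilinear.zero_left[OF assms] by simp
next
  case False
  obtain K where K: "\<And>x y. norm (A x y) \<le> norm x * norm y * K"
    using bounded_bilinear.bounded[OF assms] by blast
  have "bdd_below ((\<lambda>v. A v v / (norm v)\<^sup>2) ` (- {0}))"
  proof (rule bdd_belowI2[where m = "- K"])
    fix x :: 'x assume x: "x \<in> - {0}"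
    have "\<bar>A x x\<bar> \<le> (norm x)\<^sup>2 * K" using K[of x x] by (simp add: power2_eq_square)
    then have "- K * (norm x)\<^sup>2 \<le> A x x" by (simp add: abs_le_iff algebra_simps)
    then show "- K \<le> A x x / (norm x)\<^sup>2" using x by (simp add: le_divide_eq)
  qed
  then have "coercivity_factor A \<le> A v v / (norm v)\<^sup>2"
    unfolding coercivity_factor_def using False by (intro cInf_lower) auto
  then show ?thesis using False by (simp add: le_divide_eq)
qed

lemma residual_eq_error_form:
  assumes "bounded_bilinear A" and "\<And>v. A u v = f v"
  shows "f v - A uR v = A (u - uR) v"
  using assms by (simp add: bounded_bilinear.diff_left)

lemma coercivity_factor_mult_norm_error_le:
  fixes A :: "'x::real_normed_vector \<Rightarrow> 'x \<Rightarrow> real"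
  assumes A: "bounded_bilinear A" and R: "bounded_linear R" and err: "\<And>v. A e v = R v"
  shows "coercivity_factor A * norm e \<le> onorm R"
proof (cases "e = 0")
  case True
  then show ?thesis using onorm_pos_le[OF R] by simp
next
  case False
  have "coercivity_factor A * (norm e)\<^sup>2 \<le> R e"
    using coercivity_factor_mult_norm_le[OF A, of e] err by simp
  also have "\<dots> \<le> onorm R * norm e"
    using onorm[OF R, of e] by simp
  finally show ?thesis
    using False by (simp add: power2_eq_square)
qed

lemma abs_functional_error_le:
  fixes A :: "'x::real_normed_vector \<Rightarrow> 'x \<Rightarrow> real"
  assumes A: "bounded_bilinear A" and pos: "0 < coercivity_factor A"
    and F: "bounded_linear F" and R: "bounded_linear R" and err: "\<And>v. A e v = R v"
  shows "\<bar>F e\<bar> \<le> onorm F * onorm R / coercivity_factor A"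
proof -
  have "\<bar>F e\<bar> \<le> onorm F * norm e"
    using onorm[OF F, of e] by simp
  also have "\<dots> \<le> onorm F * (onorm R / coercivity_factor A)"
    using coercivity_factor_mult_norm_error_le[OF A R err] pos onorm_pos_le[OF F]
    by (intro mult_left_mono) (simp_all add: field_simps)
  finally show ?thesis by simp
qed

lemma abs_functional_approx_error_le:
  fixes A :: "'x::real_normed_vector \<Rightarrow> 'x \<Rightarrow> real"
  assumes A: "bounded_bilinear A" and pos: "0 < coercivity_factor A"
    and u: "\<And>v. A u v = f v" and F: "bounded_linear F"
  shows "\<bar>F (u - uR)\<bar> \<le> onorm F * onorm (\<lambda>v. f v - A uR v) / coercivity_factor A"
proof -
  have R: "(\<lambda>v. f v - A uR v) = A (u - uR)"
    using residual_eq_error_form[OF A u] by auto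
  show ?thesis
    unfolding R using bounded_bilinear.bounded_linear_right[OF A]
    by (intro abs_functional_error_le[OF A pos F]) simp_all
qed

theorem mainTheorem4:
  fixes a :: "real^'k \<Rightarrow> real^'p \<Rightarrow> 'x::{real_inner,complete_space} \<Rightarrow> 'x \<Rightarrow> real"
    and f l :: "real^'k \<Rightarrow> real^'p \<Rightarrow> 'x \<Rightarrow> real"
    and Xi :: "(real^'k) set" and PP :: "(real^'p) set"
    and XR XR1 XR2 XR3 XR4 :: "'x set"
    and u uR u1 u2 u3 u4 :: "real^'k \<Rightarrow> real^'p \<Rightarrow> 'x"
    and r r1 r2 r3 r4 l2 l3 l4 :: "real^'k \<Rightarrow> real^'p \<Rightarrow> 'x \<Rightarrow> real"
    and Q :: "real^'k \<Rightarrow> real^'p \<Rightarrow> real"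
    and ys :: "nat \<Rightarrow> real^'k" and \<mu> :: "real^'p" and N :: nat
  assumes sep: "separable_space (euclidean :: 'x topology)"
    and bil: "\<And>y m. y \<in> Xi \<Longrightarrow> m \<in> PP \<Longrightarrow> bounded_bilinear (a y m)"
    and coer: "\<And>y m. y \<in> Xi \<Longrightarrow> m \<in> PP \<Longrightarrow> 0 < coercivity_factor (a y m)"
    and f_lin: "\<And>y m. y \<in> Xi \<Longrightarrow> m \<in> PP \<Longrightarrow> bounded_linear (f y m)"
    and l_lin: "\<And>y m. y \<in> Xi \<Longrightarrow> m \<in> PP \<Longrightarrow> bounded_linear (l y m)"
    and subs: "subspace XR" "subspace XR1" "subspace XR2" "subspace XR3" "subspace XR4"
    and u_sol: "\<And>y m v. y \<in> Xi \<Longrightarrow> m \<in> PP \<Longrightarrow> a y m (u y m) v = f y m v"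
    and uR_mem: "\<And>y m. y \<in> Xi \<Longrightarrow> m \<in> PP \<Longrightarrow> uR y m \<in> XR"
    and uR_sol: "\<And>y m v. y \<in> Xi \<Longrightarrow> m \<in> PP \<Longrightarrow> v \<in> XR \<Longrightarrow> a y m (uR y m) v = f y m v"
    and r_def: "r = (\<lambda>y m v. f y m v - a y m (uR y m) v)"
    and u1_mem: "\<And>y m. y \<in> Xi \<Longrightarrow> m \<in> PP \<Longrightarrow> u1 y m \<in> XR1"
    and u1_sol: "\<And>y m v. y \<in> Xi \<Longrightarrow> m \<in> PP \<Longrightarrow> v \<in> XR1 \<Longrightarrow> a y m v (u1 y m) = - l y m v"
    and r1_def: "r1 = (\<lambda>y m v. - l y m v - a y m v (u1 y m))"
    and Q_def: "Q = (\<lambda>y m. l y m (uR y m) - r y m (u1 y m))"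
    and l2_def: "l2 = (\<lambda>y m v. 2 * Q y m * l y m v)"
    and l3_def: "l3 = (\<lambda>y m v. MC_E N (\<lambda>n. Q (ys n) m) * l y m v)"
    and l4_def: "l4 = (\<lambda>y m v. MC_Eu N (\<lambda>n. Q (ys n) m) * l y m v)"
    and u2_mem: "\<And>y m. y \<in> Xi \<Longrightarrow> m \<in> PP \<Longrightarrow> u2 y m \<in> XR2"
    and u2_sol: "\<And>y m v. y \<in> Xi \<Longrightarrow> m \<in> PP \<Longrightarrow> v \<in> XR2 \<Longrightarrow> a y m v (u2 y m) = - l2 y m v"
    and r2_def: "r2 = (\<lambda>y m v. - l2 y m v - a y m v (u2 y m))"
    and u3_mem: "\<And>y m. y \<in> Xi \<Longrightarrow> m \<in> PP \<Longrightarrow> u3 y m \<in> XR3"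
    and u3_sol: "\<And>y m v. y \<in> Xi \<Longrightarrow> m \<in> PP \<Longrightarrow> v \<in> XR3 \<Longrightarrow> a y m v (u3 y m) = - l3 y m v"
    and r3_def: "r3 = (\<lambda>y m v. - l3 y m v - a y m v (u3 y m))"
    and u4_mem: "\<And>y m. y \<in> Xi \<Longrightarrow> m \<in> PP \<Longrightarrow> u4 y m \<in> XR4"
    and u4_sol: "\<And>y m v. y \<in> Xi \<Longrightarrow> m \<in> PP \<Longrightarrow> v \<in> XR4 \<Longrightarrow> a y m v (u4 y m) = - l4 y m v"
    and r4_def: "r4 = (\<lambda>y m v. - l4 y m v - a y m v (u4 y m))"
    and mu: "\<mu> \<in> PP"
    and samples: "\<And>n. n < N \<Longrightarrow> ys n \<in> Xi"
    and N2: "N \<ge> 2"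
  shows "\<bar>MC_V N (\<lambda>n. l (ys n) \<mu> (u (ys n) \<mu>))
          - MC_V N (\<lambda>n. l (ys n) \<mu> (uR (ys n) \<mu>))
          + MC_V N (\<lambda>n. r (ys n) \<mu> (u1 (ys n) \<mu>))
          + MC_Eu N (\<lambda>n. r (ys n) \<mu> (u2 (ys n) \<mu>))
          - MC_Eu N (\<lambda>n. r (ys n) \<mu> (u3 (ys n) \<mu>))
          - MC_E N (\<lambda>n. r (ys n) \<mu> (u4 (ys n) \<mu>))\<bar>
   \<le> MC_Eu N (\<lambda>n. (dual_norm (r (ys n) \<mu>))\<^sup>2 * (dual_norm (r1 (ys n) \<mu>))\<^sup>2
                     / (coercivity_factor (a (ys n) \<mu>))\<^sup>2)
     + MC_E N (\<lambda>n. dual_norm (r (ys n) \<mu>) * dual_norm (r1 (ys n) \<mu>)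
                     / coercivity_factor (a (ys n) \<mu>))
       * MC_Eu N (\<lambda>n. dual_norm (r (ys n) \<mu>) * dual_norm (r1 (ys n) \<mu>)
                     / coercivity_factor (a (ys n) \<mu>))
     + MC_Eu N (\<lambda>n. dual_norm (\<lambda>v. r2 (ys n) \<mu> v - r3 (ys n) \<mu> v
                                    - (real N - 1) / real N * r4 (ys n) \<mu> v)
                     * dual_norm (r (ys n) \<mu>) / coercivity_factor (a (ys n) \<mu>))"
proof -
  define e where "e y = u y \<mu> - uR y \<mu>" for y
  define B where "B y = dual_norm (r y \<mu>) * dual_norm (r1 y \<mu>) / coercivity_factor (a y \<mu>)" for y
  define C where "C y = dual_norm (\<lambda>v. r2 y \<mu> v - r3 y \<mu> v - (real N - 1) / real N * r4 y \<mu> v)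
    * dual_norm (r y \<mu>) / coercivity_factor (a y \<mu>)" for y
  have res: "r y \<mu> v = a y \<mu> (e y) v" if "y \<in> Xi" for y v
    using residual_eq_error_form[OF bil[OF that mu] u_sol[OF that mu]] by (simp add: r_def e_def)
  have bound: "\<bar>R (e y)\<bar> \<le> dual_norm R * dual_norm (r y \<mu>) / coercivity_factor (a y \<mu>)"
    if "y \<in> Xi" and "bounded_linear R" for y R
    using abs_functional_approx_error_le[OF bil[OF that(1) mu] coer[OF that(1) mu] u_sol[OF that(1) mu] that(2)]
    by (simp add: e_def r_def)
  have dual_lin: "bounded_linear (\<lambda>v. - (c * l y \<mu> v) - a y \<mu> v z)" if "y \<in> Xi" for y c z
    using l_lin[OF that mu] bounded_bilinear.bounded_linear_left[OF bil[OF that mu]]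
    by (intro bounded_linear_sub bounded_linear_minus bounded_linear_const_mult)
  have out: "l y \<mu> (e y) = - (r y \<mu> (u1 y \<mu>) + r1 y \<mu> (e y))" if "y \<in> Xi" for y
    using res[OF that] by (simp add: r1_def)
  have sq: "(\<lambda>n. (dual_norm (r (ys n) \<mu>))\<^sup>2 * (dual_norm (r1 (ys n) \<mu>))\<^sup>2
      / (coercivity_factor (a (ys n) \<mu>))\<^sup>2) = (\<lambda>n. (B (ys n))\<^sup>2)"
    by (simp add: B_def power_divide power_mult_distrib)
  show ?thesis
    unfolding sq B_def[symmetric] C_def[symmetric]
  proof (rule MC_control_variate_bound[where Q = "\<lambda>n. Q (ys n) \<mu>" and d = "\<lambda>n. r1 (ys n) \<mu> (e (ys n))"
        and t = "\<lambda>n. r (ys n) \<mu> (u1 (ys n) \<mu>)" and w\<^sub>2 = "\<lambda>n. r2 (ys n) \<mu> (e (ys n))"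
        and w\<^sub>3 = "\<lambda>n. r3 (ys n) \<mu> (e (ys n))" and w\<^sub>4 = "\<lambda>n. r4 (ys n) \<mu> (e (ys n))"])
    fix n assume "n < N"
    then have y: "ys n \<in> Xi" by (rule samples)
    show "l (ys n) \<mu> (u (ys n) \<mu>) = Q (ys n) \<mu> - r1 (ys n) \<mu> (e (ys n))"
      using out[OF y] linear_diff[OF bounded_linear.linear[OF l_lin[OF y mu]]]
      by (simp add: Q_def e_def)
    show "l (ys n) \<mu> (uR (ys n) \<mu>) = Q (ys n) \<mu> + r (ys n) \<mu> (u1 (ys n) \<mu>)"
      by (simp add: Q_def)
    show "r (ys n) \<mu> (u2 (ys n) \<mu>) = 2 * Q (ys n) \<mu> * (r (ys n) \<mu> (u1 (ys n) \<mu>)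
        + r1 (ys n) \<mu> (e (ys n))) - r2 (ys n) \<mu> (e (ys n))"
      using out[OF y] res[OF y, of "u2 (ys n) \<mu>"] by (simp add: r2_def l2_def ring_distribs)
    show "r (ys n) \<mu> (u3 (ys n) \<mu>) = MC_E N (\<lambda>n. Q (ys n) \<mu>) * (r (ys n) \<mu> (u1 (ys n) \<mu>)
        + r1 (ys n) \<mu> (e (ys n))) - r3 (ys n) \<mu> (e (ys n))"
      using out[OF y] res[OF y, of "u3 (ys n) \<mu>"] by (simp add: r3_def l3_def ring_distribs)
    show "r (ys n) \<mu> (u4 (ys n) \<mu>) = MC_Eu N (\<lambda>n. Q (ys n) \<mu>) * (r (ys n) \<mu> (u1 (ys n) \<mu>)
        + r1 (ys n) \<mu> (e (ys n))) - r4 (ys n) \<mu> (e (ys n))"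
      using out[OF y] res[OF y, of "u4 (ys n) \<mu>"] by (simp add: r4_def l4_def ring_distribs)
    show "\<bar>r1 (ys n) \<mu> (e (ys n))\<bar> \<le> B (ys n)"
      using bound[OF y, of "r1 (ys n) \<mu>"] dual_lin[OF y, of 1] by (simp add: B_def r1_def mult.commute)
    have "bounded_linear (\<lambda>v. r2 (ys n) \<mu> v - r3 (ys n) \<mu> v - (real N - 1) / real N * r4 (ys n) \<mu> v)"
      unfolding r2_def r3_def r4_def l2_def l3_def l4_def
      by (intro bounded_linear_sub bounded_linear_const_mult dual_lin[OF y])
    then show "\<bar>r2 (ys n) \<mu> (e (ys n)) - r3 (ys n) \<mu> (e (ys n))
        - (real N - 1) / real N * r4 (ys n) \<mu> (e (ys n))\<bar> \<le> C (ys n)"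
      using bound[OF y] by (simp add: C_def)
  qed (use N2 in simp)
qed

end
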